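(* Model $\mathbb H^2$ as the Poincaré upper half-plane $\{(u,v)\in\mathbb R^2: v>0\}$ with metric $ds^2=(du^2+dv^2)/v^2$, and consider $\mathbb H^2\times\mathbb R$ with the product metric. Let $A=((0,3),0)$, $B=((4,5),1)$, $C=((-4,5),1)$. Then $$\operatorname{conv}\{A,B,C\}\neq\bigcup\{[A,D]\mid D\in[B,C]\}.$$ More precisely, the point $\bigl((0,\sqrt{17}),\,1-\tfrac{\ln2}{\ln3}\bigr)$ lies in $\operatorname{conv}\{A,B,C\}$, while the only point of $\bigcup\{[A,D]\mid D\in[B,C]\}$ with first coordinate $(0,\sqrt{17})$ is $\bigl((0,\sqrt{17}),\,\tfrac{\ln17-2\ln3}{\ln41-2\ln3}\bigr)$, and these two numbers differ (the first is $<2/5$, the second $>2/5$).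
   Context: In $\mathbb H^2\times\mathbb R$ (a Cartan--Hadamard manifold), the geodesic segment $[P,Q]$ from $P=(x_0,y_0)$ to $Q=(x_1,y_1)$ is $\{(c(t),(1-t)y_0+ty_1): t\in[0,1]\}$, where $c\colon[0,1]\to\mathbb H^2$ is the constant-speed hyperbolic geodesic with $c(0)=x_0$, $c(1)=x_1$. A set $K$ is convex if $[P,Q]\subseteq K$ for all $P,Q\in K$, and $\operatorname{conv}(H)$ is the intersection of all convex sets containing $H$. The hyperbolic distance in the half-plane model is $d(a,b)=2\ln\frac{\sqrt{(a_1-b_1)^2+(a_2-b_2)^2}+\sqrt{(a_1-b_1)^2+(a_2+b_2)^2}}{2\sqrt{a_2b_2}}$. *)

theory Defs
  imports "HOL-Analysis.Analysis"
begin

type_synonym hpt = "real \<times> real"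
type_synonym pt = "hpt \<times> real"

definition H2 :: "hpt set" where
  "H2 = {p. snd p > 0}"

definition HR :: "pt set" where
  "HR = H2 \<times> UNIV"

definition hdist :: "hpt \<Rightarrow> hpt \<Rightarrow> real" where
  "hdist a b = 2 * ln ((sqrt ((fst a - fst b)^2 + (snd a - snd b)^2)
                     + sqrt ((fst a - fst b)^2 + (snd a + snd b)^2))
                     / (2 * sqrt (snd a * snd b)))"

definition hgeod :: "(real \<Rightarrow> hpt) \<Rightarrow> hpt \<Rightarrow> hpt \<Rightarrow> bool" where
  "hgeod c x0 x1 \<longleftrightarrow> c 0 = x0 \<and> c 1 = x1 \<and> (\<forall>t\<in>{0..1}. c t \<in> H2) \<and>
     (\<forall>s\<in>{0..1}. \<forall>t\<in>{0..1}. hdist (c s) (c t) = \<bar>s - t\<bar> * hdist x0 x1)"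

definition seg :: "pt \<Rightarrow> pt \<Rightarrow> pt set" where
  "seg P Q = {(c t, (1 - t) * snd P + t * snd Q) | c t.
               hgeod c (fst P) (fst Q) \<and> t \<in> {0..1}}"

definition gconvex :: "pt set \<Rightarrow> bool" where
  "gconvex K \<longleftrightarrow> (\<forall>P\<in>K. \<forall>Q\<in>K. seg P Q \<subseteq> K)"

definition gconv :: "pt set \<Rightarrow> pt set" where
  "gconv H = \<Inter>{K. K \<subseteq> HR \<and> gconvex K \<and> H \<subseteq> K}"

end

theory Submission
  imports Defs
begin

text \<open>
Distances are computed from \<open>cosh d(a,b) = 1 + |a - b|\<^sup>2 / (2 a\<^sub>2 b\<^sub>2)\<close>, and geodesic
segments from unit-speed parametrisations of vertical lines and of semicircles centred on the
boundary. The point \<open>(1,4)\<close> divides the hyperbolic arc from \<open>(0,3)\<close> to \<open>(4,5)\<close> in the ratio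
\<open>s = 1 - ln 2 / ln 3\<close>, so \<open>((1,4),s) \<in> [A,B]\<close>, and symmetrically \<open>((-1,4),s) \<in> [A,C]\<close>;
the midpoint \<open>((0,\<surd>17),s)\<close> of the segment joining them therefore lies in the convex hull.
On the other hand, if \<open>((0,\<surd>17),z) \<in> [A,D]\<close> then equality holds in the triangle inequality
for \<open>(0,3)\<close>, \<open>(0,\<surd>17)\<close> and \<open>fst D\<close>; via \<open>cosh (d\<^sub>1 + d\<^sub>2)\<close> this forces \<open>fst D\<close> onto the
axis \<open>u = 0\<close>, so \<open>D\<close> is the top \<open>((0,\<surd>41),1)\<close> of the geodesic from \<open>B\<close> to \<open>C\<close>, and \<open>z\<close> is read
off from distances along the axis.
\<close>

lemma cosh_two_ln_ratio:
  fixes r1 r2 q :: real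
  assumes "r1 \<ge> 0" "r2 \<ge> 0" "q > 0" "r2\<^sup>2 = r1\<^sup>2 + 4 * q\<^sup>2"
  shows "cosh (2 * ln ((r1 + r2) / (2 * q))) = 1 + r1\<^sup>2 / (2 * q\<^sup>2)"
    and "2 * ln ((r1 + r2) / (2 * q)) \<ge> 0"
proof -
  define X where "X = (r1 + r2) / (2 * q)"
  have "(2 * q)\<^sup>2 \<le> r2\<^sup>2" using assms(4) by (simp add: power2_eq_square)
  then have "2 * q \<le> r2" using assms(2) by (rule power2_le_imp_le)
  then have X1: "X \<ge> 1" using assms(1,3) by (simp add: X_def field_simps)
  then show "2 * ln X \<ge> 0" by simp
  have "(r1 + r2) * (r2 - r1) = 4 * q\<^sup>2"
    using assms(4) by (simp add: algebra_simps power2_eq_square)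
  then have invX: "inverse X = (r2 - r1) / (2 * q)"
    using X1 assms(3) by (simp add: X_def field_simps power2_eq_square)
  have "2 * ln X = ln (X\<^sup>2)" using X1 by (simp add: ln_realpow)
  then have "cosh (2 * ln X) = (X\<^sup>2 + (inverse X)\<^sup>2) / 2"
    using X1 by (simp add: cosh_ln_real power_inverse)
  also have "\<dots> = ((r1 + r2)\<^sup>2 + (r2 - r1)\<^sup>2) / (8 * q\<^sup>2)"
    unfolding invX unfolding X_def using assms(3) by (simp add: field_simps)
  also have "\<dots> = 1 + r1\<^sup>2 / (2 * q\<^sup>2)"
    using assms(3,4) by (simp add: field_simps power2_eq_square)
  finally show "cosh (2 * ln X) = 1 + r1\<^sup>2 / (2 * q\<^sup>2)" .
qed

lemma
  assumes "snd a > 0" "snd b > 0"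
  shows cosh_hdist:
      "cosh (hdist a b) = 1 + ((fst a - fst b)\<^sup>2 + (snd a - snd b)\<^sup>2) / (2 * snd a * snd b)"
    and hdist_nonneg: "hdist a b \<ge> 0"
proof -
  let ?r1 = "sqrt ((fst a - fst b)\<^sup>2 + (snd a - snd b)\<^sup>2)"
  let ?r2 = "sqrt ((fst a - fst b)\<^sup>2 + (snd a + snd b)\<^sup>2)"
  let ?q = "sqrt (snd a * snd b)"
  have q: "?q > 0" "?q\<^sup>2 = snd a * snd b" using assms by simp_all
  have "?r1\<^sup>2 = (fst a - fst b)\<^sup>2 + (snd a - snd b)\<^sup>2"
    and "?r2\<^sup>2 = (fst a - fst b)\<^sup>2 + (snd a + snd b)\<^sup>2" by simp_all
  then have "?r2\<^sup>2 = ?r1\<^sup>2 + 4 * ?q\<^sup>2"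
    unfolding q(2) by (simp add: power2_eq_square algebra_simps)
  note * = cosh_two_ln_ratio[of ?r1 ?r2 ?q, OF _ _ q(1) this, folded hdist_def]
  show "hdist a b \<ge> 0" by (rule *(2)) simp_all
  show "cosh (hdist a b) = 1 + ((fst a - fst b)\<^sup>2 + (snd a - snd b)\<^sup>2) / (2 * snd a * snd b)"
    using *(1) q(2) by (simp add: mult.assoc)
qed

lemma hdist_eqI:
  assumes "snd a > 0" "snd b > 0" "x \<ge> 0" "cosh (hdist a b) = cosh x"
  shows "hdist a b = x"
  by (metis assms arcosh_cosh_real hdist_nonneg)

definition geodesic_line :: "(real \<Rightarrow> hpt) \<Rightarrow> bool" where
  "geodesic_line g \<longleftrightarrow> (\<forall>\<tau>. g \<tau> \<in> H2) \<and> (\<forall>\<sigma> \<tau>. hdist (g \<sigma>) (g \<tau>) = \<bar>\<sigma> - \<tau>\<bar>)"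

lemma geodesic_lineI:
  assumes "\<And>\<tau>. snd (g \<tau>) > 0"
    and "\<And>\<sigma> \<tau>. cosh (hdist (g \<sigma>) (g \<tau>)) = cosh (\<sigma> - \<tau>)"
  shows "geodesic_line g"
proof -
  have "cosh \<bar>x\<bar> = cosh x" for x :: real by (cases "x \<ge> 0") auto
  then show ?thesis unfolding geodesic_line_def H2_def using assms by (auto intro!: hdist_eqI)
qed

lemma geodesic_line_vertical: "geodesic_line (\<lambda>\<tau>. (u, exp \<tau>))"
proof (rule geodesic_lineI)
  show "cosh (hdist (u, exp \<sigma>) (u, exp \<tau>)) = cosh (\<sigma> - \<tau>)" for \<sigma> \<tau>
  proof -
    have "cosh (\<sigma> - \<tau>) = (exp \<sigma> / exp \<tau> + exp \<tau> / exp \<sigma>) / 2"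
      by (simp add: cosh_def exp_diff exp_minus)
    then show ?thesis by (simp add: cosh_hdist field_simps power2_eq_square)
  qed
qed simp

definition semicircle :: "real \<Rightarrow> real \<Rightarrow> real \<Rightarrow> hpt" where
  "semicircle m R \<tau> = (m + R * tanh \<tau>, R / cosh \<tau>)"

lemma geodesic_line_semicircle:
  assumes "R > 0"
  shows "geodesic_line (semicircle m R)"
  unfolding semicircle_def
proof (rule geodesic_lineI)
  fix \<sigma> \<tau> :: real
  have pyth: "(cosh \<sigma>)\<^sup>2 = (sinh \<sigma>)\<^sup>2 + 1" "(cosh \<tau>)\<^sup>2 = (sinh \<tau>)\<^sup>2 + 1"
    by (simp_all add: cosh_square_eq)
  show "cosh (hdist (m + R * tanh \<sigma>, R / cosh \<sigma>) (m + R * tanh \<tau>, R / cosh \<tau>))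
      = cosh (\<sigma> - \<tau>)"
    using assms by (simp add: cosh_hdist cosh_diff tanh_def field_simps) (use pyth in algebra)
qed (use assms in simp)

lemma hdist_vertical: "\<alpha> > 0 \<Longrightarrow> \<beta> > 0 \<Longrightarrow> hdist (u, \<alpha>) (u, \<beta>) = \<bar>ln \<alpha> - ln \<beta>\<bar>"
  using geodesic_line_vertical[of u] unfolding geodesic_line_def by (metis exp_ln)

lemma cosh_arsinh_real: "cosh (arsinh x) = sqrt (x\<^sup>2 + 1)" for x :: real
  by (metis cosh_real_pos cosh_square_eq less_eq_real_def real_sqrt_unique sinh_arsinh_real)

lemma semicircle_arsinh:
  assumes "h > 0"
  shows "semicircle 0 (sqrt (k\<^sup>2 + h\<^sup>2)) (arsinh (k / h)) = (k, h)"
proof -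
  have "(k / h)\<^sup>2 + 1 = (k\<^sup>2 + h\<^sup>2) / h\<^sup>2" using assms by (simp add: field_simps)
  then have "sqrt ((k / h)\<^sup>2 + 1) = sqrt (k\<^sup>2 + h\<^sup>2) / h"
    using assms by (simp add: real_sqrt_divide)
  moreover have "sqrt (k\<^sup>2 + h\<^sup>2) > 0" using assms by (simp add: add_nonneg_pos)
  ultimately show ?thesis
    using assms by (simp add: semicircle_def tanh_def cosh_arsinh_real)
qed

lemma hgeod_geodesic_line:
  assumes "geodesic_line g"
  shows "hgeod (\<lambda>t. g (a + t * (b - a))) (g a) (g b)"
proof -
  have "hdist (g (a + s * (b - a))) (g (a + t * (b - a))) = \<bar>s - t\<bar> * hdist (g a) (g b)"
    for s t
    using assms unfolding geodesic_line_def
    by (simp add: abs_mult abs_minus_commute flip: right_diff_distrib left_diff_distrib)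
  then show ?thesis using assms unfolding hgeod_def geodesic_line_def by simp
qed

lemma geodesic_line_in_seg:
  assumes "geodesic_line g" "fst P = g a" "fst Q = g b" "a \<noteq> b" "p = g \<tau>"
    and "r = (\<tau> - a) / (b - a)" "0 \<le> r" "r \<le> 1" "z = (1 - r) * snd P + r * snd Q"
  shows "(p, z) \<in> seg P Q"
proof -
  have "p = g (a + r * (b - a))" using assms(4-6) by simp
  then show ?thesis unfolding seg_def using assms(2,3,7-9) hgeod_geodesic_line[OF assms(1)]
    by (intro CollectI exI[of _ "\<lambda>t. g (a + t * (b - a))"] exI[of _ r]) auto
qed

lemma hgeod_hdist:
  assumes "hgeod c x0 x1" "t \<in> {0..1}"
  shows "hdist x0 (c t) = t * hdist x0 x1" "hdist (c t) x1 = (1 - t) * hdist x0 x1"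
proof -
  have "c 0 = x0" "c 1 = x1"
    and d: "\<forall>s\<in>{0..1}. \<forall>t\<in>{0..1}. hdist (c s) (c t) = \<bar>s - t\<bar> * hdist x0 x1"
    using assms(1) unfolding hgeod_def by auto
  then show "hdist x0 (c t) = t * hdist x0 x1" "hdist (c t) x1 = (1 - t) * hdist x0 x1"
    using d[rule_format, of 0 t] d[rule_format, of t 1] assms(2) by auto
qed

lemma segE:
  assumes "(p, z) \<in> seg P Q"
  obtains t where "t \<in> {0..1}" "z = (1 - t) * snd P + t * snd Q" "p \<in> H2"
    "hdist (fst P) p = t * hdist (fst P) (fst Q)"
    "hdist p (fst Q) = (1 - t) * hdist (fst P) (fst Q)"
proof -
  from assms obtain c t where "hgeod c (fst P) (fst Q)" "t \<in> {0..1}" "p = c t"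
    "z = (1 - t) * snd P + t * snd Q"
    unfolding seg_def by auto
  with that hgeod_hdist show thesis unfolding hgeod_def by blast
qed

lemma cosh_add_sq:
  "(cosh (x + y) - cosh x * cosh y)\<^sup>2 = ((cosh x)\<^sup>2 - 1) * ((cosh y)\<^sup>2 - 1)" for x y :: real
  by (simp add: cosh_add power_mult_distrib sinh_square_eq)

lemma hdist_additive_vertical:
  assumes "\<alpha> > 0" "\<beta> > 0" "\<alpha> \<noteq> \<beta>" "snd b > 0"
    and "hdist (u, \<alpha>) (u, \<beta>) + hdist (u, \<beta>) b = hdist (u, \<alpha>) b"
  shows "fst b = u"
proof -
  obtain x y where b: "b = (x, y)" by (cases b)
  have y: "y > 0" using assms(4) b by simp
  define d1 d2 where "d1 = hdist (u, \<alpha>) (u, \<beta>)" and "d2 = hdist (u, \<beta>) b"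
  have c1: "cosh d1 = 1 + (\<alpha> - \<beta>)\<^sup>2 / (2 * \<alpha> * \<beta>)"
    unfolding d1_def using assms(1,2) by (simp add: cosh_hdist)
  have c2: "cosh d2 = 1 + ((u - x)\<^sup>2 + (\<beta> - y)\<^sup>2) / (2 * \<beta> * y)"
    unfolding d2_def b using assms(2) y by (simp add: cosh_hdist)
  have c3: "cosh (d1 + d2) = 1 + ((u - x)\<^sup>2 + (\<alpha> - y)\<^sup>2) / (2 * \<alpha> * y)"
    unfolding d1_def d2_def assms(5) unfolding b using assms(1) y by (simp add: cosh_hdist)
  have "(cosh (d1 + d2) - cosh d1 * cosh d2)\<^sup>2 - ((cosh d1)\<^sup>2 - 1) * ((cosh d2)\<^sup>2 - 1)
      = - ((\<beta>\<^sup>2 - \<alpha>\<^sup>2) * (x - u) / (2 * \<alpha> * \<beta> * y))\<^sup>2"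
    unfolding c1 c2 c3 using assms(1,2) y by (simp add: field_simps) algebra
  then have "(\<beta>\<^sup>2 - \<alpha>\<^sup>2) * (x - u) = 0" using assms(1,2) y by (simp add: cosh_add_sq)
  moreover have "\<beta>\<^sup>2 \<noteq> \<alpha>\<^sup>2" using assms(1-3) by simp
  ultimately show ?thesis using b by simp
qed

lemma hdist_additive_symmetric:
  assumes "h > 0" "y > 0"
    and "hdist (k, h) (0, y) + hdist (0, y) (-k, h) = hdist (k, h) (-k, h)"
  shows "y = sqrt (k\<^sup>2 + h\<^sup>2)"
proof -
  define R where "R = sqrt (k\<^sup>2 + h\<^sup>2)"
  have R: "R \<ge> 0" "R\<^sup>2 = k\<^sup>2 + h\<^sup>2" unfolding R_def by simp_all
  define d where "d = hdist (k, h) (0, y)"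
  have c: "cosh d = (R\<^sup>2 + y\<^sup>2) / (2 * h * y)"
    unfolding d_def R(2) using assms(1,2) by (simp add: cosh_hdist field_simps power2_eq_square)
  have "hdist (0, y) (-k, h) = d"
    unfolding d_def using assms(1,2)
    by (intro hdist_eqI) (simp_all add: hdist_nonneg cosh_hdist power2_commute mult.commute)
  then have "cosh (2 * d) = 1 + 2 * k\<^sup>2 / h\<^sup>2"
    using assms by (simp add: cosh_hdist flip: d_def mult_2) (simp add: field_simps power2_eq_square)
  then have "2 * (cosh d)\<^sup>2 - 1 = 1 + 2 * k\<^sup>2 / h\<^sup>2" by (metis cosh_double_cosh)
  then have "(cosh d)\<^sup>2 = (R / h)\<^sup>2" using assms(1) R(2) by (simp add: field_simps)
  then have "cosh d = R / h" using assms(1) R(1) by simp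
  then have "R\<^sup>2 + y\<^sup>2 = 2 * R * y"
    unfolding c using assms(1,2)
    by (simp add: field_simps) (metis mult.left_commute mult_cancel_left distrib_left less_irrefl)
  then have "(y - R)\<^sup>2 = 0" by (simp add: power2_diff algebra_simps)
  then show ?thesis unfolding R_def by simp
qed

lemma gconvex_gconv: "gconvex (gconv H)"
  unfolding gconvex_def gconv_def by blast

lemma subset_gconv: "H \<subseteq> gconv H"
  unfolding gconv_def by blast

lemma axis_point_in_gconv:
  "((0, sqrt 17), 1 - ln 2 / ln 3) \<in> gconv {((0, 3), 0), ((4, 5), 1), ((-4, 5), 1)}"
proof -
  let ?K = "gconv {((0, 3), 0), ((4, 5), 1), ((-4, 5), 1)}"
  have seg_K: "seg P Q \<subseteq> ?K" if "P \<in> ?K" "Q \<in> ?K" for P Q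
    using gconvex_gconv that unfolding gconvex_def by blast
  have A: "((0, 3), 0) \<in> ?K" and B: "((4, 5), 1) \<in> ?K" and C: "((-4, 5), 1) \<in> ?K"
    using subset_gconv[of "{((0, 3), 0), ((4, 5), 1), ((-4, 5), 1)}"] by simp_all
  define s :: real where "s = 1 - ln 2 / ln 3"
  have s: "s = (- ln 2 - - ln 3) / (0 - - ln 3)" "0 \<le> s" "s \<le> 1"
    by (simp_all add: s_def field_simps)
  have "((1, 4), s) \<in> seg ((0, 3), 0) ((4, 5), 1)"
    by (rule geodesic_line_in_seg[where g = "semicircle 4 5" and a = "- ln 3" and b = 0
          and \<tau> = "- ln 2" and r = s])
      (use s in \<open>simp_all add: geodesic_line_semicircle semicircle_def tanh_def
        sinh_ln_real cosh_ln_real\<close>)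
  moreover have "((-1, 4), s) \<in> seg ((0, 3), 0) ((-4, 5), 1)"
    by (rule geodesic_line_in_seg[where g = "semicircle (-4) 5" and a = "ln 3" and b = 0
          and \<tau> = "ln 2" and r = s])
      (use s in \<open>simp_all add: geodesic_line_semicircle semicircle_def tanh_def
        sinh_ln_real cosh_ln_real field_simps\<close>)
  moreover have "((0, sqrt 17), s) \<in> seg ((1, 4), s) ((-1, 4), s)"
    by (rule geodesic_line_in_seg[where g = "semicircle 0 (sqrt 17)" and a = "arsinh (1/4)"
          and b = "arsinh (-1/4)" and \<tau> = 0 and r = "1/2"])
      (use semicircle_arsinh[of 4 1] semicircle_arsinh[of 4 "-1"] in
        \<open>simp_all add: geodesic_line_semicircle semicircle_def\<close>)
  ultimately show ?thesis using seg_K A B C unfolding s_def by blast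
qed

lemma axis_point_in_cone_iff:
  "((0, sqrt 17), z) \<in> (\<Union>D\<in>seg ((4, 5), 1) ((-4, 5), 1). seg ((0, 3), 0) D)
    \<longleftrightarrow> z = (ln 17 - 2 * ln 3) / (ln 41 - 2 * ln 3)"
  (is "?P \<in> ?U \<longleftrightarrow> z = ?z")
proof -
  have sqrt_gt_3: "sqrt 17 > (3::real)" "sqrt 41 > (3::real)" by (simp_all add: real_less_rsqrt)
  then have dist_axis: "hdist (0, 3) (0, sqrt 17) = ln (sqrt 17) - ln 3"
    "hdist (0, 3) (0, sqrt 41) = ln (sqrt 41) - ln 3"
    by (simp_all add: hdist_vertical)
  have ln_ord: "ln 3 < ln (sqrt 17)" "ln (sqrt 17) < ln (sqrt 41)" using sqrt_gt_3 by simp_all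
  then have ratio: "?z = (ln (sqrt 17) - ln 3) / (ln (sqrt 41) - ln 3)"
    using order.strict_trans[OF ln_ord] by (simp add: ln_sqrt field_simps)
  have den: "0 < ln (sqrt 41) - ln 3" using ln_ord by linarith
  have ratio_01: "0 \<le> (ln (sqrt 17) - ln 3) / (ln (sqrt 41) - ln 3)"
    "(ln (sqrt 17) - ln 3) / (ln (sqrt 41) - ln 3) \<le> 1"
    using ln_ord den by (simp_all only: zero_le_divide_iff divide_le_eq_1_pos) linarith+
  show ?thesis
  proof
    assume "?P \<in> ?U"
    then obtain p w where D: "(p, w) \<in> seg ((4, 5), 1) ((-4, 5), 1)"
      and P: "?P \<in> seg ((0, 3), 0) (p, w)"
      by auto
    obtain t where z: "z = t * w" and t: "hdist (0, 3) (0, sqrt 17) = t * hdist (0, 3) p"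
      and "hdist (0, sqrt 17) p = (1 - t) * hdist (0, 3) p"
      by (rule segE[OF P]) auto
    then have "hdist (0, 3) (0, sqrt 17) + hdist (0, sqrt 17) p = hdist (0, 3) p"
      by (simp add: algebra_simps)
    moreover obtain t' where w: "w = 1" and y: "snd p > 0"
      and "hdist (4, 5) p + hdist p (-4, 5) = hdist (4, 5) (-4, 5)"
      by (rule segE[OF D]) (auto simp: H2_def algebra_simps)
    ultimately have p: "p = (0, snd p)"
      using sqrt_gt_3 hdist_additive_vertical[of 3 "sqrt 17" p 0] by (simp add: prod_eq_iff)
    with \<open>hdist (4, 5) p + hdist p (-4, 5) = hdist (4, 5) (-4, 5)\<close> have "snd p = sqrt 41"
      using hdist_additive_symmetric[of 5 "snd p" 4] y by simp
    with p have "p = (0, sqrt 41)" by simp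
    then have "t * (ln (sqrt 41) - ln 3) = ln (sqrt 17) - ln 3" using t by (simp add: dist_axis)
    moreover have "ln (sqrt 41) - ln 3 \<noteq> 0" using den by linarith
    ultimately show "z = ?z" using z w unfolding ratio by (simp add: nonzero_eq_divide_eq)
  next
    assume z: "z = ?z"
    have "((0, sqrt 41), 1) \<in> seg ((4, 5), 1) ((-4, 5), 1)"
      by (rule geodesic_line_in_seg[where g = "semicircle 0 (sqrt 41)" and a = "arsinh (4/5)"
            and b = "arsinh (-4/5)" and \<tau> = 0 and r = "1/2"])
        (use semicircle_arsinh[of 5 4] semicircle_arsinh[of 5 "-4"] in
          \<open>simp_all add: geodesic_line_semicircle semicircle_def\<close>)
    moreover have "?P \<in> seg ((0, 3), 0) ((0, sqrt 41), 1)"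
      by (rule geodesic_line_in_seg[where g = "\<lambda>\<tau>. (0, exp \<tau>)" and a = "ln 3"
            and b = "ln (sqrt 41)" and \<tau> = "ln (sqrt 17)" and r = ?z])
        (use z ratio ratio_01 sqrt_gt_3 in \<open>simp_all add: geodesic_line_vertical\<close>)
    ultimately show "?P \<in> ?U" by blast
  qed
qed

lemma ln_bounds:
  "1 - ln 2 / ln 3 < (2::real) / 5" "(2::real) / 5 < (ln 17 - 2 * ln 3) / (ln 41 - 2 * ln 3)"
proof -
  have "ln (27::real) = 3 * ln 3" "ln (32::real) = 5 * ln 2" "ln (9::real) = 2 * ln 3"
    "ln (1225449::real) = 2 * ln 41 + 6 * ln 3" "ln (1419857::real) = 5 * ln 17"
    using ln_realpow[of 3 3] ln_realpow[of 2 5] ln_realpow[of 3 2] ln_realpow[of 17 5]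
      ln_mult[of "41 ^ 2" "3 ^ 6"] ln_realpow[of 41 2] ln_realpow[of 3 6]
    by simp_all
  moreover have "ln (27::real) < ln 32" "ln (1225449::real) < ln 1419857" "ln (9::real) < ln 41"
    by simp_all
  ultimately show "1 - ln 2 / ln 3 < (2::real) / 5"
    and "(2::real) / 5 < (ln 17 - 2 * ln 3) / (ln 41 - 2 * ln 3)"
    by (simp_all add: field_simps)
qed

theorem mainTheorem11:
  fixes A B C :: pt
  assumes "A = ((0, 3), 0)" and "B = ((4, 5), 1)" and "C = ((-4, 5), 1)"
  shows "gconv {A, B, C} \<noteq> (\<Union>D\<in>seg B C. seg A D)
    \<and> ((0, sqrt 17), 1 - ln 2 / ln 3) \<in> gconv {A, B, C}
    \<and> ((0, sqrt 17), (ln 17 - 2 * ln 3) / (ln 41 - 2 * ln 3)) \<in> (\<Union>D\<in>seg B C. seg A D)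
    \<and> (\<forall>z. ((0, sqrt 17), z) \<in> (\<Union>D\<in>seg B C. seg A D)
            \<longrightarrow> z = (ln 17 - 2 * ln 3) / (ln 41 - 2 * ln 3))
    \<and> 1 - ln 2 / ln 3 < (2::real) / 5
    \<and> (2::real) / 5 < (ln 17 - 2 * ln 3) / (ln 41 - 2 * ln 3)"
proof -
  have hull: "((0, sqrt 17), 1 - ln 2 / ln 3) \<in> gconv {A, B, C}"
    unfolding assms by (rule axis_point_in_gconv)
  have cone: "((0, sqrt 17), z) \<in> (\<Union>D\<in>seg B C. seg A D)
      \<longleftrightarrow> z = (ln 17 - 2 * ln 3) / (ln 41 - 2 * ln 3)" for z
    unfolding assms by (rule axis_point_in_cone_iff)
  have "1 - ln 2 / ln 3 \<noteq> (ln 17 - 2 * ln 3) / (ln 41 - 2 * ln (3::real))"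
    using ln_bounds by linarith
  with hull cone have "gconv {A, B, C} \<noteq> (\<Union>D\<in>seg B C. seg A D)" by blast
  with hull cone ln_bounds show ?thesis by blast
qed

end
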